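(* Let $e_1,\dots,e_k\in\mathbb{C}^{n\times n}$ be an anticommuting family, $n\ge1$. (i) If $\mathrm{rk}(e_i^2)=\mathrm{rk}(e_i^3)$ for every $i\in[k]$ (which holds in particular if every $e_i^2$ is diagonalisable), then $\sum_{i=1}^k\mathrm{rk}(e_i^2)\le (2\log_2 n+1)n$. (ii) If every $e_i$ is diagonalisable, then $\sum_{i=1}^k\mathrm{rk}(e_i)\le(2\log_2 n+1)n$.
   Context: A family $e_1,\dots,e_k$ of complex $n\times n$ matrices is called anticommuting if $e_ie_j=-e_je_i$ for all distinct $i,j\in[k]=\{1,\dots,k\}$. $\mathrm{rk}$ denotes matrix rank. *)

theory Defs
  imports "HOL-Analysis.Analysis"
begin

definition diagonalizable :: "'a::field^'n^'n \<Rightarrow> bool" where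
  "diagonalizable A \<longleftrightarrow>
     (\<exists>(P::'a^'n^'n) (D::'a^'n^'n). invertible P \<and> (\<forall>i j. i \<noteq> j \<longrightarrow> D $ i $ j = 0) \<and> A = P ** D ** matrix_inv P)"

definition anticommuting :: "nat \<Rightarrow> (nat \<Rightarrow> 'a::ring_1^'n^'n) \<Rightarrow> bool" where
  "anticommuting k e \<longleftrightarrow>
     (\<forall>i\<in>{1..k}. \<forall>j\<in>{1..k}. i \<noteq> j \<longrightarrow> e i ** e j = - (e j ** e i))"

end

theory Submission
  imports Defs "HOL-Computational_Algebra.Fundamental_Theorem_Algebra"
begin

text \<open>
  The core is a Clifford-algebra bound: if \<open>d\<close> pairwise anticommuting linear maps act
  injectively on a complex space \<open>W \<noteq> 0\<close>, then \<open>d \<le> 2 log\<^sub>2 (dim W) + 1\<close>. For \<open>a \<noteq> b\<close> the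
  map \<open>u = f\<^sub>a f\<^sub>b\<close> anticommutes with \<open>f\<^sub>a\<close> and commutes with every other \<open>f\<^sub>i\<close>; since \<open>f\<^sub>a\<close>
  maps the \<open>c\<close>-eigenspace of \<open>u\<close> into the \<open>-c\<close>-eigenspace, an eigenspace \<open>E\<close> of \<open>u\<close> has
  \<open>dim E \<le> dim W / 2\<close>, and the \<open>d - 2\<close> maps \<open>u f\<^sub>i\<close> restrict to a family of the same kind on \<open>E\<close>.

  For the ranks of squares, each \<open>f\<^sub>i\<^sup>2\<close> commutes with all \<open>f\<^sub>j\<close>, and
  \<open>rk f\<^sub>i\<^sup>2 = rk f\<^sub>i\<^sup>3\<close> makes \<open>W = im f\<^sub>i\<^sup>2 \<oplus> ker f\<^sub>i\<^sup>2\<close> a splitting into invariant subspaces.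
  If some \<open>f\<^sub>i\<^sup>2\<close> is neither zero nor injective on \<open>W\<close>, induct on both summands, using that
  \<open>n (2 log\<^sub>2 n + 1)\<close> is superadditive; otherwise the \<open>f\<^sub>i\<close> with \<open>f\<^sub>i\<^sup>2 \<noteq> 0\<close> are injective
  and the Clifford bound applies. Diagonalisable matrices satisfy \<open>rk e = rk e\<^sup>2 = rk e\<^sup>3\<close>.
\<close>

abbreviation vec_linear :: "('a::field^'n \<Rightarrow> 'a^'n) \<Rightarrow> bool" where
  "vec_linear f \<equiv> Vector_Spaces.linear (*s) (*s) f"

definition endomorphisms_on :: "('a::field^'n) set \<Rightarrow> 'i set \<Rightarrow> ('i \<Rightarrow> 'a^'n \<Rightarrow> 'a^'n) \<Rightarrow> bool"
  where "endomorphisms_on W S f \<longleftrightarrow> (\<forall>i\<in>S. vec_linear (f i) \<and> f i ` W \<subseteq> W)"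

definition anticommuting_on :: "'i set \<Rightarrow> ('i \<Rightarrow> 'v \<Rightarrow> 'v::uminus) \<Rightarrow> bool"
  where "anticommuting_on S f \<longleftrightarrow> (\<forall>i\<in>S. \<forall>j\<in>S. i \<noteq> j \<longrightarrow> (\<forall>x. f i (f j x) = - f j (f i x)))"

section \<open>Eigenvectors on invariant subspaces\<close>

lemma vec_linear_funpow: "vec_linear u \<Longrightarrow> vec_linear (u ^^ i)"
proof (induction i)
  case 0
  then show ?case by (simp add: vec.linear_id id_def[symmetric])
next
  case (Suc i)
  then show ?case
    using Vector_Spaces.linear_compose[of "(*s)" "(*s)" "u^^i" "(*s)" u] by (simp add: o_def)
qed

lemma funpow_in_invariant: "u ` W \<subseteq> W \<Longrightarrow> w \<in> W \<Longrightarrow> (u ^^ i) w \<in> W"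
  by (induction i) auto

definition op_poly :: "('a::field^'n \<Rightarrow> 'a^'n) \<Rightarrow> 'a poly \<Rightarrow> 'a^'n \<Rightarrow> 'a^'n"
  where "op_poly u p x = (\<Sum>i\<le>degree p. coeff p i *s (u ^^ i) x)"

lemma op_poly_eq_sum_atMost:
  "degree p \<le> N \<Longrightarrow> op_poly u p x = (\<Sum>i\<le>N. coeff p i *s (u ^^ i) x)"
  unfolding op_poly_def by (rule sum.mono_neutral_left) (auto simp: coeff_eq_0)

lemma op_poly_linear_factor:
  assumes "vec_linear u"
  shows "op_poly u ([:-r, 1:] * q) x = op_poly u q (u x - r *s x)"
proof -
  let ?N = "Suc (degree q)"
  let ?S1 = "\<Sum>i\<le>degree q. coeff q i *s (u ^^ i) (u x)"
  let ?S2 = "\<Sum>i\<le>degree q. (r * coeff q i) *s (u ^^ i) x"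
  have deg: "degree ([:-r, 1:] * q) \<le> ?N"
    using degree_mult_le[of "[:-r, 1:]" q] by simp
  have "[:-r, 1:] * q = smult (-r) q + pCons 0 q" by simp
  then have "op_poly u ([:-r, 1:] * q) x
      = (\<Sum>i\<le>?N. (-r * coeff q i + coeff (pCons 0 q) i) *s (u ^^ i) x)"
    using op_poly_eq_sum_atMost[OF deg] by simp
  also have "\<dots> = (\<Sum>i\<le>?N. (-r * coeff q i) *s (u ^^ i) x) + (\<Sum>i\<le>?N. coeff (pCons 0 q) i *s (u ^^ i) x)"
    by (simp only: vec.scale_left_distrib sum.distrib)
  also have "(\<Sum>i\<le>?N. coeff (pCons 0 q) i *s (u ^^ i) x) = ?S1"
    by (subst sum.atMost_Suc_shift) (simp add: funpow_swap1)
  also have "(\<Sum>i\<le>?N. (-r * coeff q i) *s (u ^^ i) x) = - ?S2"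
    by (simp add: coeff_eq_0 sum_negf)
  also have "- ?S2 + ?S1 = (\<Sum>i\<le>degree q. coeff q i *s ((u ^^ i) (u x) - r *s (u ^^ i) x))"
    by (simp add: vec.scale_right_diff_distrib sum_subtractf mult.commute)
  also have "\<dots> = op_poly u q (u x - r *s x)"
    unfolding op_poly_def using vec_linear_funpow[OF assms]
    by (simp add: vec.linear_diff vec.linear_scale)
  finally show ?thesis .
qed

text \<open>Peeling off linear factors of \<open>p\<close> (which exist by the fundamental theorem of algebra)
  one at a time, the last nonzero vector produced is an eigenvector.\<close>
lemma eigenvector_if_op_poly_eq_0:
  fixes u :: "complex^'n \<Rightarrow> complex^'n"
  assumes u: "vec_linear u" and W: "vec.subspace W" "u ` W \<subseteq> W"
  shows "p \<noteq> 0 \<Longrightarrow> x \<in> W \<Longrightarrow> x \<noteq> 0 \<Longrightarrow> op_poly u p x = 0 \<Longrightarrow>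
    \<exists>v\<in>W. v \<noteq> 0 \<and> (\<exists>c. u v = c *s v)"
proof (induction "degree p" arbitrary: p x rule: less_induct)
  case less
  show ?case
  proof (cases "degree p = 0")
    case True
    then have "op_poly u p x = coeff p 0 *s x" by (simp add: op_poly_def)
    moreover have "coeff p 0 \<noteq> 0" using True less.prems(1) leading_coeff_0_iff by fastforce
    ultimately show ?thesis using less.prems by simp
  next
    case False
    then have "\<not> constant (poly p)" by (simp add: constant_degree)
    then obtain r where "poly p r = 0" using fundamental_theorem_of_algebra by blast
    then obtain q where pq: "p = [:-r, 1:] * q" by (metis dvdE poly_eq_0_iff_dvd)
    with less.prems have "q \<noteq> 0" by auto
    then have "degree p = degree [:-r, 1:] + degree q"
      unfolding pq by (intro degree_mult_eq) auto
    then have deg: "degree q < degree p" by simp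
    show ?thesis
    proof (cases "u x - r *s x = 0")
      case True
      then show ?thesis using less.prems by auto
    next
      case False
      have "u x - r *s x \<in> W"
        using W less.prems(2) by (auto intro: vec.subspace_diff vec.subspace_scale)
      moreover have "op_poly u q (u x - r *s x) = 0"
        using less.prems(4) pq op_poly_linear_factor[OF u] by simp
      ultimately show ?thesis using less.hyps[OF deg \<open>q \<noteq> 0\<close>] False by blast
    qed
  qed
qed

lemma vec_family_dependent:
  fixes g :: "nat \<Rightarrow> 'a::field^'n"
  assumes g: "\<And>i. i \<le> d \<Longrightarrow> g i \<in> W" and d: "vec.dim W \<le> d"
  obtains c where "\<exists>i\<le>d. c i \<noteq> 0" and "(\<Sum>i\<le>d. c i *s g i) = 0"
proof (cases "inj_on g {..d}")
  case True
  have "\<not> vec.independent (g ` {..d})"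
  proof
    assume "vec.independent (g ` {..d})"
    then have "card (g ` {..d}) \<le> vec.dim W"
      using g by (intro vec.independent_card_le_dim) auto
    with True d show False by (simp add: card_image)
  qed
  then obtain c where "\<exists>v\<in>g ` {..d}. c v \<noteq> 0" "(\<Sum>v\<in>g ` {..d}. c v *s v) = 0"
    using vec.dependent_finite[of "g ` {..d}"] by auto
  with True show ?thesis by (intro that[of "c \<circ> g"]) (auto simp: sum.reindex)
next
  case False
  then obtain i j where ij: "i < j" "j \<le> d" "g i = g j"
    unfolding inj_on_def by (metis atMost_iff linorder_neqE_nat)
  let ?c = "\<lambda>l. if l = j then 1 else if l = i then -1 else 0"
  have "(\<Sum>l\<le>d. ?c l *s g l) = (\<Sum>l\<in>{i, j}. ?c l *s g l)"
    by (rule sum.mono_neutral_right) (use ij in auto)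
  also have "\<dots> = 0" using ij by simp
  finally show ?thesis using ij by (intro that[of ?c]) auto
qed

lemma op_poly_annihilator_exists:
  assumes "u ` W \<subseteq> W" "w \<in> W"
  obtains p where "p \<noteq> 0" "op_poly u p w = 0"
proof -
  let ?d = "vec.dim W"
  obtain c where c: "\<exists>i\<le>?d. c i \<noteq> 0" "(\<Sum>i\<le>?d. c i *s (u ^^ i) w) = 0"
    using vec_family_dependent[of ?d "\<lambda>i. (u ^^ i) w" W] funpow_in_invariant[OF assms] by blast
  define p where "p = (\<Sum>i\<le>?d. monom (c i) i)"
  have coeff_p: "coeff p j = (if j \<le> ?d then c j else 0)" for j
    unfolding p_def by (simp add: coeff_sum)
  have "degree p \<le> ?d" by (rule degree_le) (simp add: coeff_p)
  then have "op_poly u p w = 0"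
    using c(2) by (simp add: op_poly_eq_sum_atMost coeff_p)
  moreover have "p \<noteq> 0" using c(1) coeff_p by (metis coeff_0)
  ultimately show ?thesis by (rule that[rotated])
qed

lemma eigenvector_exists:
  fixes u :: "complex^'n \<Rightarrow> complex^'n"
  assumes "vec_linear u" "vec.subspace W" "u ` W \<subseteq> W" "w \<in> W" "w \<noteq> 0"
  obtains v c where "v \<in> W" "v \<noteq> 0" "u v = c *s v"
  using op_poly_annihilator_exists[OF assms(3,4)] eigenvector_if_op_poly_eq_0[OF assms(1-3)] assms(4,5)
  by metis

lemma nonzero_eigenvalue_exists:
  fixes u :: "complex^'n \<Rightarrow> complex^'n"
  assumes u: "vec_linear u" and W: "vec.subspace W" "u ` W \<subseteq> W" "inj_on u W" "0 < vec.dim W"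
  obtains c where "c \<noteq> 0" "0 < vec.dim {x\<in>W. u x = c *s x}"
proof -
  have "\<not> W \<subseteq> {0}" using W(4) by (metis less_irrefl vec.dim_eq_0)
  then obtain w where "w \<in> W" "w \<noteq> 0" by blast
  then obtain v c where v: "v \<in> W" "v \<noteq> 0" "u v = c *s v"
    using eigenvector_exists[OF u W(1,2)] by metis
  show ?thesis
  proof (rule that)
    show "c \<noteq> 0"
    proof
      assume "c = 0"
      then have "u v = u 0" using v vec.linear_0[OF u] by simp
      then show False using W(3) v vec.subspace_0[OF W(1)] unfolding inj_on_def by blast
    qed
    have "\<not> {x\<in>W. u x = c *s x} \<subseteq> {0}" using v by auto
    then show "0 < vec.dim {x\<in>W. u x = c *s x}" by (metis neq0_conv vec.dim_eq_0)
  qed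
qed

section \<open>Anticommuting automorphisms\<close>

lemma inj_on_if_dim_image_eq:
  assumes f: "vec_linear f" and W: "vec.subspace W" and eq: "vec.dim (f ` W) = vec.dim W"
  shows "inj_on f W"
proof -
  obtain B where B: "B \<subseteq> W" "vec.independent B" "W \<subseteq> vec.span B" "card B = vec.dim W"
    using vec.basis_exists[of W] by blast
  have fin: "finite B" using B(2) vec.finiteI_independent by blast
  have span: "f ` W \<subseteq> vec.span (f ` B)" using vec.linear_spans_image[OF f B(3)] .
  have "vec.dim (f ` W) \<le> card (f ` B)" using vec.dim_le_card[OF span] fin by simp
  then have card_eq: "card (f ` B) = card B" using card_image_le[OF fin, of f] eq B(4) by simp
  then have "inj_on f B" by (simp add: inj_on_iff_eq_card[OF fin])
  moreover have "vec.independent (f ` B)"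
    by (rule vec.card_le_dim_spanning[OF _ span]) (use B(1) fin card_eq eq B(4) in auto)
  ultimately have "inj_on f (vec.span B)"
    using vec.linear_inj_on_span_independent_image[OF f] by blast
  then show ?thesis using B(3) inj_on_subset by blast
qed

lemma dim_add_le_if_Int_zero:
  assumes "vec.subspace W" "vec.subspace A" "vec.subspace B" "A \<subseteq> W" "B \<subseteq> W" "A \<inter> B \<subseteq> {0}"
  shows "vec.dim A + vec.dim B \<le> vec.dim (W :: ('a::field^'n) set)"
proof -
  have "vec.dim {x + y |x y. x \<in> A \<and> y \<in> B} \<le> vec.dim W"
    by (rule vec.dim_subset) (use assms vec.subspace_add in blast)
  moreover have "vec.dim (A \<inter> B) = 0" using assms(6) vec.dim_eq_0 by blast
  ultimately show ?thesis using vec.dim_sums_Int[OF assms(2,3)] by linarith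
qed

lemma subspace_eigenspace:
  assumes "vec_linear u" "vec.subspace W"
  shows "vec.subspace {x\<in>W. u x = c *s x}"
  using assms(2) unfolding vec.subspace_def
  by (auto simp: vec.linear_add[OF assms(1)] vec.linear_scale[OF assms(1)] vec.linear_0[OF assms(1)]
      vec.scale_right_distrib vec.scale_left_commute)

text \<open>\<open>f\<close> maps the \<open>c\<close>-eigenspace of \<open>u\<close> injectively into the \<open>-c\<close>-eigenspace.\<close>
lemma dim_eigenspace_le_half:
  fixes u f :: "complex^'n \<Rightarrow> complex^'n"
  assumes u: "vec_linear u" and f: "vec_linear f" and W: "vec.subspace W" "f ` W \<subseteq> W" "inj_on f W"
    and anti: "\<And>x. u (f x) = - f (u x)" and "c \<noteq> 0"
  shows "2 * vec.dim {x\<in>W. u x = c *s x} \<le> vec.dim W"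
proof -
  let ?E = "\<lambda>c. {x\<in>W. u x = c *s x}"
  have img: "f ` ?E c \<subseteq> ?E (-c)"
    using W(2) by (auto simp: anti vec.linear_scale[OF f])
  have dim_img: "vec.dim (f ` ?E c) = vec.dim (?E c)"
  proof (rule vec.dim_image_eq[OF f])
    have "vec.span (?E c) = ?E c"
      using subspace_eigenspace[OF u W(1)] by (rule vec.span_eq_iff[THEN iffD2])
    then show "inj_on f (vec.span (?E c))"
      using inj_on_subset[OF W(3)] by (metis (no_types, lifting) mem_Collect_eq subsetI)
  qed
  have "vec.dim (?E c) \<le> vec.dim (?E (-c))"
    using vec.dim_subset[OF img] dim_img by linarith
  moreover have "?E c \<inter> ?E (-c) \<subseteq> {0}"
  proof
    fix x assume "x \<in> ?E c \<inter> ?E (-c)"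
    then have "c *s x = (-c) *s x" by auto
    then have "(c - (-c)) *s x = 0" by (simp only: vec.scale_left_diff_distrib diff_self)
    moreover have "c - (-c) \<noteq> 0" using \<open>c \<noteq> 0\<close> by simp
    ultimately show "x \<in> {0}" by simp
  qed
  then have "vec.dim (?E c) + vec.dim (?E (-c)) \<le> vec.dim W"
    using W by (intro dim_add_le_if_Int_zero subspace_eigenspace[OF u]) auto
  ultimately show ?thesis by simp
qed

lemma endomorphisms_on_subset: "endomorphisms_on W S f \<Longrightarrow> T \<subseteq> S \<Longrightarrow> endomorphisms_on W T f"
  unfolding endomorphisms_on_def by blast

lemma anticommuting_on_subset: "anticommuting_on S f \<Longrightarrow> T \<subseteq> S \<Longrightarrow> anticommuting_on T f"
  unfolding anticommuting_on_def by blast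

lemma anticommuting_on_twist:
  fixes f :: "'i \<Rightarrow> 'a::field^'n \<Rightarrow> 'a^'n"
  assumes anti: "anticommuting_on S f" and u: "vec_linear u"
    and comm: "\<And>i x. i \<in> S \<Longrightarrow> u (f i x) = f i (u x)"
  shows "anticommuting_on S (\<lambda>i x. u (f i x))"
  unfolding anticommuting_on_def
proof (intro ballI impI allI)
  fix i j x assume ij: "i \<in> S" "j \<in> S" "i \<noteq> j"
  have "u (f i (u (f j x))) = u (u (f i (f j x)))" using comm ij by simp
  also have "\<dots> = - u (u (f j (f i x)))"
  proof -
    have "f i (f j x) = - f j (f i x)" using anti ij unfolding anticommuting_on_def by blast
    then show ?thesis by (simp add: vec.linear_neg[OF u])
  qed
  also have "u (u (f j (f i x))) = u (f j (u (f i x)))" using comm ij by simp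
  finally show "u (f i (u (f j x))) = - u (f j (u (f i x)))" .
qed

lemma endomorphisms_on_eigenspace:
  assumes endo: "endomorphisms_on W S g" and u: "vec_linear u"
    and comm: "\<And>i x. i \<in> S \<Longrightarrow> u (g i x) = g i (u x)"
  shows "endomorphisms_on {x\<in>W. u x = c *s x} S g"
  using endo unfolding endomorphisms_on_def
  by (auto simp: comm vec.linear_scale[OF u] vec.linear_scale)

lemma endomorphisms_on_compose:
  assumes "endomorphisms_on W S f" "vec_linear u" "u ` W \<subseteq> W"
  shows "endomorphisms_on W S (\<lambda>i x. u (f i x))"
  unfolding endomorphisms_on_def
proof (intro ballI conjI)
  fix i assume "i \<in> S"
  then have f: "vec_linear (f i)" "f i ` W \<subseteq> W" using assms(1) unfolding endomorphisms_on_def by auto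
  show "vec_linear (\<lambda>x. u (f i x))"
    using Vector_Spaces.linear_compose[OF f(1) assms(2)] by (simp add: o_def)
  show "(\<lambda>x. u (f i x)) ` W \<subseteq> W" using f(2) assms(3) by auto
qed

lemma anticommuting_on_product:
  assumes anti: "anticommuting_on S f" and lin: "vec_linear (f a)" and ab: "a \<in> S" "b \<in> S" "a \<noteq> b"
  shows "f a (f b (f a x)) = - f a (f a (f b x))"
    and "\<And>i. i \<in> S - {a, b} \<Longrightarrow> f a (f b (f i x)) = f i (f a (f b x))"
proof -
  have anti_ij: "f i (f j y) = - f j (f i y)" if "i \<in> S" "j \<in> S" "i \<noteq> j" for i j y
    using anti that unfolding anticommuting_on_def by blast
  show "f a (f b (f a x)) = - f a (f a (f b x))"
    using anti_ij[of b a x] vec.linear_neg[OF lin] ab by simp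
  fix i assume i: "i \<in> S - {a, b}"
  have "f a (f b (f i x)) = f a (- f i (f b x))" using anti_ij[of b i x] ab i by auto
  also have "\<dots> = - f a (f i (f b x))" using vec.linear_neg[OF lin] by simp
  also have "\<dots> = f i (f a (f b x))" using anti_ij[of a i "f b x"] ab i by auto
  finally show "f a (f b (f i x)) = f i (f a (f b x))" .
qed

lemma anticommuting_automorphisms_reduce:
  fixes f :: "'i \<Rightarrow> complex^'n \<Rightarrow> complex^'n"
  assumes W: "vec.subspace W" "0 < vec.dim W" and endo: "endomorphisms_on W S f"
    and inj: "\<forall>i\<in>S. inj_on (f i) W" and anti: "anticommuting_on S f"
    and ab: "a \<in> S" "b \<in> S" "a \<noteq> b"
  obtains E :: "(complex^'n) set" and g :: "'i \<Rightarrow> complex^'n \<Rightarrow> complex^'n"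
  where "vec.subspace E" "0 < vec.dim E" "2 * vec.dim E \<le> vec.dim W"
    "endomorphisms_on E (S - {a, b}) g" "\<forall>i\<in>S - {a, b}. inj_on (g i) E"
    "anticommuting_on (S - {a, b}) g"
proof -
  have f: "vec_linear (f i)" "f i ` W \<subseteq> W" if "i \<in> S" for i
    using endo that unfolding endomorphisms_on_def by auto
  define u where "u = (\<lambda>x. f a (f b x))"
  have u: "vec_linear u"
    using Vector_Spaces.linear_compose[OF f(1)[OF ab(2)] f(1)[OF ab(1)]] by (simp add: u_def o_def)
  have uW: "u ` W \<subseteq> W" using f(2) ab unfolding u_def by blast
  have "inj_on (f a \<circ> f b) W"
  proof (rule comp_inj_on)
    show "inj_on (f b) W" using inj ab(2) by blast
    show "inj_on (f a) (f b ` W)" using inj ab f(2)[OF ab(2)] by (meson inj_on_subset)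
  qed
  then have u_inj: "inj_on u W" by (simp add: u_def o_def)
  have u_comm: "u (f i x) = f i (u x)" if "i \<in> S - {a, b}" for i x
    unfolding u_def using anticommuting_on_product(2)[OF anti f(1)[OF ab(1)] ab that] .
  have u_anti: "u (f a x) = - f a (u x)" for x
    unfolding u_def using anticommuting_on_product(1)[OF anti f(1)[OF ab(1)] ab] .
  obtain c where c: "c \<noteq> 0" "0 < vec.dim {x\<in>W. u x = c *s x}"
    using nonzero_eigenvalue_exists[OF u W(1) uW u_inj W(2)] .
  define E where "E = {x\<in>W. u x = c *s x}"
  show ?thesis
  proof (rule that[of E "\<lambda>i x. u (f i x)"])
    show "vec.subspace E" unfolding E_def using subspace_eigenspace[OF u W(1)] .
    show "0 < vec.dim E" unfolding E_def using c(2) .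
    show "2 * vec.dim E \<le> vec.dim W"
      unfolding E_def using u_anti c(1) inj ab(1)
      by (intro dim_eigenspace_le_half[OF u f(1)[OF ab(1)] W(1) f(2)[OF ab(1)]]) auto
    have "endomorphisms_on W (S - {a, b}) (\<lambda>i x. u (f i x))"
      by (rule endomorphisms_on_compose[OF endomorphisms_on_subset[OF endo Diff_subset] u uW])
    then show "endomorphisms_on E (S - {a, b}) (\<lambda>i x. u (f i x))"
      unfolding E_def by (rule endomorphisms_on_eigenspace[OF _ u]) (simp add: u_comm)
    show "\<forall>i\<in>S - {a, b}. inj_on (\<lambda>x. u (f i x)) E"
    proof
      fix i assume "i \<in> S - {a, b}"
      then have "inj_on (u \<circ> f i) W"
        using inj f(2) by (intro comp_inj_on inj_on_subset[OF u_inj]) auto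
      moreover have "E \<subseteq> W" unfolding E_def by blast
      ultimately show "inj_on (\<lambda>x. u (f i x)) E" by (simp add: o_def inj_on_subset)
    qed
    show "anticommuting_on (S - {a, b}) (\<lambda>i x. u (f i x))"
      by (rule anticommuting_on_twist[of "S - {a, b}" f u,
            OF anticommuting_on_subset[OF anti Diff_subset] u u_comm])
  qed
qed

lemma log2_le_minus_1_if_double_le:
  assumes "0 < e" "2 * e \<le> d"
  shows "log 2 (real e) \<le> log 2 (real d) - 1"
proof -
  have "log 2 (real e) \<le> log 2 (real d / 2)"
    using assms by (subst log_le_cancel_iff) auto
  also have "\<dots> = log 2 (real d) - 1" using assms by (simp add: log_divide)
  finally show ?thesis .
qed

theorem card_anticommuting_automorphisms_le:
  fixes f :: "'i \<Rightarrow> complex^'n \<Rightarrow> complex^'n"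
  assumes "vec.subspace W" "0 < vec.dim W" "finite S" "endomorphisms_on W S f"
    "\<forall>i\<in>S. inj_on (f i) W" "anticommuting_on S f"
  shows "real (card S) \<le> 2 * log 2 (real (vec.dim W)) + 1"
  using assms
proof (induction "vec.dim W" arbitrary: W S f rule: less_induct)
  case less
  show ?case
  proof (cases "card S \<le> 1")
    case True
    moreover have "0 \<le> log 2 (real (vec.dim W))" using less.prems(2) by simp
    ultimately show ?thesis by simp
  next
    case False
    then obtain a b where ab: "a \<in> S" "b \<in> S" "a \<noteq> b"
      using less.prems(3) by (metis One_nat_def card_le_Suc0_iff_eq)
    obtain E :: "(complex^'n) set" and g :: "'i \<Rightarrow> complex^'n \<Rightarrow> complex^'n"
      where E: "vec.subspace E" "0 < vec.dim E" "2 * vec.dim E \<le> vec.dim W"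
      and g: "endomorphisms_on E (S - {a, b}) g" "\<forall>i\<in>S - {a, b}. inj_on (g i) E"
        "anticommuting_on (S - {a, b}) g"
      using anticommuting_automorphisms_reduce[OF less.prems(1,2,4-6) ab] by blast
    have "real (card (S - {a, b})) \<le> 2 * log 2 (real (vec.dim E)) + 1"
      using E less.prems(3) g by (intro less.hyps) auto
    moreover have "card S = card (S - {a, b}) + 2"
      using ab less.prems(3) False by (simp add: card_Diff_subset)
    moreover have "log 2 (real (vec.dim E)) \<le> log 2 (real (vec.dim W)) - 1"
      using log2_le_minus_1_if_double_le E(2,3) .
    ultimately show ?thesis by simp
  qed
qed

section \<open>Ranks of squares\<close>

definition rank_sum_bound :: "nat \<Rightarrow> real"
  where "rank_sum_bound d = (2 * log 2 (real d) + 1) * real d"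

lemma rank_sum_bound_superadditive:
  assumes "a + b \<le> c"
  shows "rank_sum_bound a + rank_sum_bound b \<le> rank_sum_bound c"
proof (cases "c = 0")
  case True
  then show ?thesis using assms by (simp add: rank_sum_bound_def)
next
  case False
  let ?l = "2 * log 2 (real c) + 1"
  have le: "rank_sum_bound x \<le> ?l * real x" if "x \<le> c" for x
  proof (cases "x = 0")
    case False
    then have "log 2 (real x) \<le> log 2 (real c)" using that by simp
    then show ?thesis unfolding rank_sum_bound_def by (intro mult_right_mono) auto
  qed (simp add: rank_sum_bound_def)
  have "?l * real a + ?l * real b \<le> ?l * real c"
    using False assms by (simp add: distrib_left[symmetric] mult_left_mono)
  then show ?thesis using le[of a] le[of b] assms unfolding rank_sum_bound_def by linarith
qed

lemma anticommuting_on_square_commute: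
  assumes "anticommuting_on S f" "i \<in> S" "j \<in> S" "vec_linear (f i)"
  shows "f i (f i (f j x)) = f j (f i (f i x))"
proof (cases "i = j")
  case False
  then have anti: "f i (f j y) = - f j (f i y)" for y
    using assms(1-3) unfolding anticommuting_on_def by blast
  have "f i (f i (f j x)) = - f i (f j (f i x))" using anti[of x] vec.linear_neg[OF assms(4)] by simp
  also have "\<dots> = f j (f i (f i x))" using anti[of "f i x"] by simp
  finally show ?thesis .
qed simp

lemma image_kernel_decomposition:
  assumes h: "vec_linear h" and W: "vec.subspace W" "h ` W \<subseteq> W"
    and nil: "\<And>x. x \<in> W \<Longrightarrow> h (h x) = 0 \<Longrightarrow> h x = 0"
  shows "h ` W \<inter> {x\<in>W. h x = 0} \<subseteq> {0}"
    and "W \<subseteq> {a + b |a b. a \<in> h ` W \<and> b \<in> {x\<in>W. h x = 0}}"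
proof -
  show disj: "h ` W \<inter> {x\<in>W. h x = 0} \<subseteq> {0}"
    using nil by auto
  let ?A = "h ` W"
  have A: "vec.subspace ?A" using vec.linear_subspace_image[OF h W(1)] .
  have "inj_on h ?A"
    using disj W(2) by (subst vec.linear_inj_on_iff_eq_0[OF h A]) auto
  moreover have "vec.span ?A = ?A" using A by (rule vec.span_eq_iff[THEN iffD2])
  ultimately have "vec.dim (h ` ?A) = vec.dim ?A" using vec.dim_image_eq[OF h] by metis
  then have hA: "h ` ?A = ?A"
    using A vec.linear_subspace_image[OF h A] W(2) by (intro vec.subspace_dim_equal) auto
  show "W \<subseteq> {a + b |a b. a \<in> ?A \<and> b \<in> {x\<in>W. h x = 0}}"
  proof
    fix w assume w: "w \<in> W"
    then obtain a where a: "a \<in> ?A" "h w = h a" using hA by (metis image_iff)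
    then have "w - a \<in> W" using w W vec.subspace_diff by blast
    moreover have "h (w - a) = 0" using a vec.linear_diff[OF h] by simp
    ultimately show "w \<in> {a + b |a b. a \<in> ?A \<and> b \<in> {x\<in>W. h x = 0}}"
      using a(1) by force
  qed
qed

lemma dim_image_le_add_if_covered:
  assumes h: "vec_linear h" and AB: "vec.subspace A" "vec.subspace B"
    and cover: "W \<subseteq> {a + b |a b. a \<in> A \<and> b \<in> B}"
  shows "vec.dim (h ` W) \<le> vec.dim (h ` A) + vec.dim (h ` B)"
proof -
  have "h ` W \<subseteq> {x + y |x y. x \<in> h ` A \<and> y \<in> h ` B}"
    using cover vec.linear_add[OF h] by fastforce
  then have "vec.dim (h ` W) \<le> vec.dim {x + y |x y. x \<in> h ` A \<and> y \<in> h ` B}"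
    by (rule vec.dim_subset)
  also have "\<dots> \<le> vec.dim (h ` A) + vec.dim (h ` B)"
    using vec.dim_sums_Int[OF vec.linear_subspace_image[OF h AB(1)] vec.linear_subspace_image[OF h AB(2)]]
    by linarith
  finally show ?thesis .
qed

lemma endomorphisms_on_image_kernel:
  assumes endo: "endomorphisms_on W S f" and h: "vec_linear h" "h ` W \<subseteq> W"
    and comm: "\<And>i x. i \<in> S \<Longrightarrow> h (f i x) = f i (h x)"
  shows "endomorphisms_on (h ` W) S f" and "endomorphisms_on {x\<in>W. h x = 0} S f"
proof -
  have f: "vec_linear (f i)" "f i ` W \<subseteq> W" if "i \<in> S" for i
    using endo that unfolding endomorphisms_on_def by auto
  have "f i (h x) \<in> h ` W" if "i \<in> S" "x \<in> W" for i x
    unfolding comm[OF that(1), symmetric] using f(2)[OF that(1)] that(2) by blast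
  moreover have "h (f i x) = 0" if "i \<in> S" "h x = 0" for i x
    using comm[OF that(1)] vec.linear_0[OF f(1)[OF that(1)]] that(2) by simp
  ultimately show "endomorphisms_on (h ` W) S f" "endomorphisms_on {x\<in>W. h x = 0} S f"
    unfolding endomorphisms_on_def using f by (auto simp: image_subset_iff)
qed

lemma sum_rank_square_le_if_rank_extreme:
  fixes f :: "'i \<Rightarrow> complex^'n \<Rightarrow> complex^'n"
  assumes I: "finite I" and W: "vec.subspace W"
    and endo: "endomorphisms_on W I f" and anti: "anticommuting_on I f"
    and extreme: "\<forall>i\<in>I. vec.dim ((\<lambda>x. f i (f i x)) ` W) \<in> {0, vec.dim W}"
  shows "(\<Sum>i\<in>I. real (vec.dim ((\<lambda>x. f i (f i x)) ` W))) \<le> rank_sum_bound (vec.dim W)"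
proof -
  define S where "S = {i\<in>I. vec.dim ((\<lambda>x. f i (f i x)) ` W) = vec.dim W}"
  have "(\<Sum>i\<in>I. real (vec.dim ((\<lambda>x. f i (f i x)) ` W)))
      = (\<Sum>i\<in>I. if i \<in> S then real (vec.dim W) else 0)"
    using extreme by (intro sum.cong) (auto simp: S_def)
  also have "\<dots> = real (card S) * real (vec.dim W)"
    using I by (simp add: sum.If_cases S_def Int_def)
  also have "\<dots> \<le> rank_sum_bound (vec.dim W)"
  proof (cases "vec.dim W = 0")
    case True
    then show ?thesis unfolding True by (simp add: rank_sum_bound_def)
  next
    case False
    have "inj_on (f i) W" if "i \<in> S" for i
    proof -
      have f: "vec_linear (f i)" using that endo unfolding S_def endomorphisms_on_def by auto
      have "vec.dim ((\<lambda>x. f i (f i x)) ` W) \<le> vec.dim (f i ` W)"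
        using vec.dim_image_le[OF f, of "f i ` W"] by (simp add: image_image)
      moreover have "vec.dim (f i ` W) \<le> vec.dim W" using vec.dim_image_le[OF f] .
      ultimately have "vec.dim (f i ` W) = vec.dim W" using that unfolding S_def by simp
      then show ?thesis using inj_on_if_dim_image_eq[OF f W] by blast
    qed
    moreover have "S \<subseteq> I" unfolding S_def by blast
    ultimately have "real (card S) \<le> 2 * log 2 (real (vec.dim W)) + 1"
      using I W False endomorphisms_on_subset[OF endo] anticommuting_on_subset[OF anti]
      by (intro card_anticommuting_automorphisms_le) (auto intro: finite_subset)
    then show ?thesis unfolding rank_sum_bound_def by (intro mult_right_mono) auto
  qed
  finally show ?thesis .
qed

lemma invariant_fitting_splitting:
  fixes f :: "'i \<Rightarrow> 'a::field^'n \<Rightarrow> 'a^'n"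
  assumes W: "vec.subspace W" and endo: "endomorphisms_on W I f" and anti: "anticommuting_on I f"
    and i: "i \<in> I" and fitting: "\<And>x. f i (f i (f i x)) = 0 \<Longrightarrow> f i (f i x) = 0"
  obtains A B where "vec.subspace A" "vec.subspace B" "A = (\<lambda>x. f i (f i x)) ` W"
    "vec.dim A + vec.dim B \<le> vec.dim W" "endomorphisms_on A I f" "endomorphisms_on B I f"
    "\<And>j. j \<in> I \<Longrightarrow> vec.dim ((\<lambda>x. f j (f j x)) ` W)
      \<le> vec.dim ((\<lambda>x. f j (f j x)) ` A) + vec.dim ((\<lambda>x. f j (f j x)) ` B)"
proof -
  have f: "vec_linear (f j)" "f j ` W \<subseteq> W" if "j \<in> I" for j
    using endo that unfolding endomorphisms_on_def by auto
  have square: "vec_linear (\<lambda>x. f j (f j x))" "(\<lambda>x. f j (f j x)) ` W \<subseteq> W" if "j \<in> I" for j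
    using Vector_Spaces.linear_compose[OF f(1)[OF that] f(1)[OF that]] f(2)[OF that]
    by (auto simp: o_def image_subset_iff)
  define h where "h = (\<lambda>x. f i (f i x))"
  have h: "vec_linear h" "h ` W \<subseteq> W" unfolding h_def using square i by auto
  have nil: "h x = 0" if "h (h x) = 0" for x
    using that fitting[of "f i x"] fitting[of x] unfolding h_def by simp
  let ?A = "h ` W" and ?B = "{x\<in>W. h x = 0}"
  have A: "vec.subspace ?A" "?A \<subseteq> W" using vec.linear_subspace_image[OF h(1) W] h(2) by auto
  have B: "vec.subspace ?B" "?B \<subseteq> W"
    using vec.subspace_inter[OF W vec.linear_subspace_kernel[OF h(1)]] by (auto simp: Int_def)
  show ?thesis
  proof (rule that[OF A(1) B(1)])
    show "?A = (\<lambda>x. f i (f i x)) ` W" unfolding h_def ..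
    show "vec.dim ?A + vec.dim ?B \<le> vec.dim W"
      using image_kernel_decomposition(1)[OF h(1) W h(2) nil] A B W
      by (intro dim_add_le_if_Int_zero) auto
    show "endomorphisms_on ?A I f" "endomorphisms_on ?B I f"
      using endomorphisms_on_image_kernel[OF endo h] anticommuting_on_square_commute[OF anti i _ f(1)] i
      unfolding h_def by auto
    show "vec.dim ((\<lambda>x. f j (f j x)) ` W)
      \<le> vec.dim ((\<lambda>x. f j (f j x)) ` ?A) + vec.dim ((\<lambda>x. f j (f j x)) ` ?B)" if "j \<in> I" for j
      by (rule dim_image_le_add_if_covered[OF square(1)[OF that] A(1) B(1)
            image_kernel_decomposition(2)[OF h(1) W h(2) nil]])
  qed
qed

theorem sum_rank_square_le:
  fixes f :: "'i \<Rightarrow> complex^'n \<Rightarrow> complex^'n"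
  assumes I: "finite I" and anti: "anticommuting_on I f"
    and fitting: "\<And>i x. i \<in> I \<Longrightarrow> f i (f i (f i x)) = 0 \<Longrightarrow> f i (f i x) = 0"
  shows "vec.subspace W \<Longrightarrow> endomorphisms_on W I f \<Longrightarrow>
    (\<Sum>i\<in>I. real (vec.dim ((\<lambda>x. f i (f i x)) ` W))) \<le> rank_sum_bound (vec.dim W)"
proof (induction "vec.dim W" arbitrary: W rule: less_induct)
  case less
  note W = less.prems(1) and endo = less.prems(2)
  let ?r = "\<lambda>U i. vec.dim ((\<lambda>x. f i (f i x)) ` U)"
  show ?case
  proof (cases "\<forall>i\<in>I. ?r W i \<in> {0, vec.dim W}")
    case True
    then show ?thesis using sum_rank_square_le_if_rank_extreme[OF I W endo anti] by blast
  next
    case False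
    then obtain i where i: "i \<in> I" "?r W i \<noteq> 0" "?r W i \<noteq> vec.dim W" by blast
    obtain A B where AB: "vec.subspace A" "vec.subspace B" "A = (\<lambda>x. f i (f i x)) ` W"
      "vec.dim A + vec.dim B \<le> vec.dim W" "endomorphisms_on A I f" "endomorphisms_on B I f"
      and split: "\<And>j. j \<in> I \<Longrightarrow> ?r W j \<le> ?r A j + ?r B j"
      using invariant_fitting_splitting[OF W endo anti i(1) fitting[OF i(1)]] by blast
    have "vec.dim A < vec.dim W" "vec.dim B < vec.dim W"
      using AB(3,4) i(2,3) by (auto simp del: vec.dim_eq_0)
    then have "(\<Sum>j\<in>I. real (?r A j)) + (\<Sum>j\<in>I. real (?r B j))
        \<le> rank_sum_bound (vec.dim A) + rank_sum_bound (vec.dim B)"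
      using less.hyps AB(1,2,5,6) by (simp add: add_mono)
    moreover have "(\<Sum>j\<in>I. real (?r W j)) \<le> (\<Sum>j\<in>I. real (?r A j)) + (\<Sum>j\<in>I. real (?r B j))"
      using split by (simp add: sum.distrib[symmetric] sum_mono flip: of_nat_add)
    ultimately show ?thesis
      using rank_sum_bound_superadditive[OF AB(4)] by linarith
  qed
qed

section \<open>Matrices\<close>

text \<open>Matrices act on row vectors, because \<open>rank\<close> over a general field is the row rank.\<close>

lemma vec_linear_vector_matrix_mult: "vec_linear (\<lambda>x. x v* (A::'a::field^'n^'n))"
proof -
  have "(\<lambda>x. x v* A) = (*v) (transpose A)" by (simp add: fun_eq_iff)
  then show ?thesis by simp
qed

lemma vector_matrix_mult_uminus_right: "x v* (- A) = - (x v* (A::'a::field^'n^'m))"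
  by (simp add: vec_eq_iff vector_matrix_mult_def sum_negf)

lemma rank_eq_dim_range_vector_matrix_mult: "rank (A::'a::field^'n^'m) = vec.dim (range (\<lambda>x. x v* A))"
proof -
  let ?B = "transpose A"
  have "column i ?B = ?B *v axis i 1" for i
    by (simp add: vec_eq_iff matrix_vector_mult_def axis_def column_def if_distrib cong: if_cong)
  then have "columns ?B \<subseteq> range ((*v) ?B)" unfolding columns_def by auto
  moreover have "range ((*v) ?B) \<subseteq> vec.span (columns ?B)"
    using matrix_vector_mult_in_columnspace_gen by blast
  ultimately have "vec.dim (range ((*v) ?B)) = vec.dim (columns ?B)"
    using vec.dim_subset[of "columns ?B"] vec.dim_subset[of "range ((*v) ?B)"] vec.dim_span
    by (metis le_antisym)
  moreover have "(*v) ?B = (\<lambda>x. x v* A)" by (simp add: fun_eq_iff)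
  ultimately show ?thesis by (simp add: row_rank_def_gen flip: columns_transpose)
qed

lemma rank_mult_eq_iff:
  fixes A B :: "'a::field^'n^'n"
  shows "rank (B ** A) = rank B \<longleftrightarrow> (\<forall>x. (x v* B) v* A = 0 \<longrightarrow> x v* B = 0)"
proof -
  let ?R = "range (\<lambda>x. x v* B)"
  note lin = vec_linear_vector_matrix_mult[of A]
  have R: "vec.subspace ?R"
    using vec.linear_subspace_image[OF vec_linear_vector_matrix_mult vec.subspace_UNIV] .
  have "rank (B ** A) = vec.dim ((\<lambda>y. y v* A) ` ?R)"
    by (simp add: rank_eq_dim_range_vector_matrix_mult image_image vector_matrix_mul_assoc)
  moreover have "vec.dim ((\<lambda>y. y v* A) ` ?R) = vec.dim ?R \<longleftrightarrow> inj_on (\<lambda>y. y v* A) ?R"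
  proof
    show "vec.dim ((\<lambda>y. y v* A) ` ?R) = vec.dim ?R \<Longrightarrow> inj_on (\<lambda>y. y v* A) ?R"
      by (rule inj_on_if_dim_image_eq[OF lin R])
    have "vec.span ?R = ?R" using R by (rule vec.span_eq_iff[THEN iffD2])
    then show "inj_on (\<lambda>y. y v* A) ?R \<Longrightarrow> vec.dim ((\<lambda>y. y v* A) ` ?R) = vec.dim ?R"
      using vec.dim_image_eq[OF lin] by metis
  qed
  ultimately show ?thesis
    by (simp add: rank_eq_dim_range_vector_matrix_mult[of B] vec.linear_inj_on_iff_eq_0[OF lin R])
qed

lemma vector_matrix_mult_diagonal:
  fixes D :: "'a::comm_semiring_1^'n^'n"
  assumes "\<And>i j. i \<noteq> j \<Longrightarrow> D $ i $ j = 0"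
  shows "(y v* D) $ j = y $ j * D $ j $ j"
proof -
  have "(y v* D) $ j = (\<Sum>i\<in>UNIV. y $ i * D $ i $ j)"
    unfolding vector_matrix_mult_def by (simp add: mult.commute)
  also have "\<dots> = (\<Sum>i\<in>UNIV. if i = j then y $ j * D $ j $ j else 0)"
    by (rule sum.cong) (use assms in auto)
  finally show ?thesis by simp
qed

lemma diagonalizable_square_kernel:
  fixes A :: "'a::field^'n^'n"
  assumes "diagonalizable A" and "(x v* A) v* A = 0"
  shows "x v* A = 0"
proof -
  obtain P D :: "'a^'n^'n" where P: "invertible P" and D: "\<And>i j. i \<noteq> j \<Longrightarrow> D $ i $ j = 0"
    and A: "A = P ** D ** matrix_inv P"
    using assms(1) unfolding diagonalizable_def by blast
  define Q where "Q = matrix_inv P"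
  have QP: "Q ** P = mat 1"
    using P someI_ex[of "\<lambda>A'. P ** A' = mat 1 \<and> A' ** P = mat 1"]
    unfolding invertible_def Q_def matrix_inv_def by auto
  define y where "y = x v* P"
  have xA: "x v* A = (y v* D) v* Q" unfolding A y_def Q_def by (simp add: vector_matrix_mul_assoc)
  have "A ** A = P ** D ** (Q ** P) ** D ** Q"
    unfolding A Q_def by (simp add: matrix_mul_assoc)
  then have "((y v* D) v* D) v* Q = 0"
    using assms(2) QP unfolding y_def by (simp add: vector_matrix_mul_assoc matrix_mul_assoc)
  then have "((y v* D) v* D) = 0"
    using QP by (metis vector_matrix_mul_assoc vector_matrix_mul_rid vector_matrix_mult_0)
  then have "y v* D = 0"
    by (simp add: vec_eq_iff vector_matrix_mult_diagonal[OF D])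
  then show ?thesis using xA by simp
qed

lemma diagonalizable_rank_square:
  assumes "diagonalizable (A::'a::field^'n^'n)"
  shows "rank (A ** A) = rank A" and "rank (A ** A ** A) = rank (A ** A)"
  using diagonalizable_square_kernel[OF assms]
  by (simp_all add: rank_mult_eq_iff flip: vector_matrix_mul_assoc)

theorem sum_rank_square_le_if_anticommuting:
  fixes e :: "nat \<Rightarrow> complex^'n^'n"
  assumes anti: "anticommuting k e"
    and rank: "\<forall>i\<in>{1..k}. rank (e i ** e i) = rank (e i ** e i ** e i)"
  shows "(\<Sum>i=1..k. real (rank (e i ** e i))) \<le> rank_sum_bound CARD('n)"
proof -
  define f where "f i x = x v* e i" for i x
  have "anticommuting_on {1..k} f"
    unfolding anticommuting_on_def
  proof (intro ballI impI allI)
    fix i j x assume ij: "i \<in> {1..k}" "j \<in> {1..k}" "i \<noteq> j"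
    have "e j ** e i = - (e i ** e j)"
      by (rule anti[unfolded anticommuting_def, rule_format]) (use ij in auto)
    then show "f i (f j x) = - f j (f i x)"
      unfolding f_def by (simp add: vector_matrix_mul_assoc vector_matrix_mult_uminus_right)
  qed
  moreover have "endomorphisms_on UNIV {1..k} f"
    unfolding endomorphisms_on_def f_def by (simp add: vec_linear_vector_matrix_mult)
  moreover have "f i (f i x) = 0" if "i \<in> {1..k}" "f i (f i (f i x)) = 0" for i x
  proof -
    have "rank ((e i ** e i) ** e i) = rank (e i ** e i)" using rank that(1) by simp
    then show ?thesis
      using that(2) unfolding rank_mult_eq_iff f_def vector_matrix_mul_assoc by blast
  qed
  ultimately have "(\<Sum>i\<in>{1..k}. real (vec.dim ((\<lambda>x. f i (f i x)) ` UNIV)))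
      \<le> rank_sum_bound (vec.dim (UNIV :: (complex^'n) set))"
    using sum_rank_square_le[of "{1..k}" f UNIV] vec.subspace_UNIV by blast
  moreover have "vec.dim ((\<lambda>x. f i (f i x)) ` UNIV) = rank (e i ** e i)" for i
    unfolding rank_eq_dim_range_vector_matrix_mult f_def vector_matrix_mul_assoc ..
  ultimately show ?thesis by (simp add: card_cart_basis)
qed

theorem mainTheorem5:
  fixes k :: nat and e :: "nat \<Rightarrow> complex^'n^'n"
  assumes "anticommuting k e"
  shows "((\<forall>i\<in>{1..k}. rank (e i ** e i) = rank (e i ** e i ** e i)) \<longrightarrow>
            (\<Sum>i=1..k. real (rank (e i ** e i)))
              \<le> (2 * log 2 (real CARD('n)) + 1) * real CARD('n))
       \<and> ((\<forall>i\<in>{1..k}. diagonalizable (e i)) \<longrightarrow>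
            (\<Sum>i=1..k. real (rank (e i)))
              \<le> (2 * log 2 (real CARD('n)) + 1) * real CARD('n))"
proof (intro conjI impI)
  assume "\<forall>i\<in>{1..k}. rank (e i ** e i) = rank (e i ** e i ** e i)"
  then show "(\<Sum>i=1..k. real (rank (e i ** e i))) \<le> (2 * log 2 (real CARD('n)) + 1) * real CARD('n)"
    using sum_rank_square_le_if_anticommuting[OF assms] unfolding rank_sum_bound_def by blast
next
  assume "\<forall>i\<in>{1..k}. diagonalizable (e i)"
  then have square: "rank (e i ** e i) = rank (e i)"
    and cube: "rank (e i ** e i) = rank (e i ** e i ** e i)" if "i \<in> {1..k}" for i
    using diagonalizable_rank_square[of "e i"] that by simp_all
  have "(\<Sum>i=1..k. real (rank (e i ** e i))) \<le> rank_sum_bound CARD('n)"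
    using sum_rank_square_le_if_anticommuting[OF assms] cube by blast
  moreover have "(\<Sum>i=1..k. real (rank (e i))) = (\<Sum>i=1..k. real (rank (e i ** e i)))"
    using square by (intro sum.cong) auto
  ultimately show "(\<Sum>i=1..k. real (rank (e i))) \<le> (2 * log 2 (real CARD('n)) + 1) * real CARD('n)"
    unfolding rank_sum_bound_def by linarith
qed

end
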